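(* There is an absolute constant $C > 0$ such that for every $L \geq 2$, $m \geq 1$, $k^* \in [m]$, $i \in \{0, \ldots, L\}$, $k \in [m]$ and $\lambda \in [m]^{L+1}$, every state $\tau$ on the path $\gamma_{\lambda, \lambda_{[i,k]}}$ differs from $\lambda$ in at most $C\log L$ coordinates and differs from $\lambda_{[i,k]}$ in at most $C\log L$ coordinates.
   Context: States are $\lambda = (\lambda_0,\ldots,\lambda_L) \in [m]^{L+1}$; coordinate $\ell$ is level $\ell$. $\lambda_{[i,k]}$ is $\lambda$ with the level-$i$ entry replaced by $k$. The procedure $\mathbf{Swap}(a,b)$ ($0\le a\le b\le L$): if $b - a \leq 1$, perform the single elementary operation exchanging the entries at levels $a$ and $b$; otherwise with $h = \lfloor (a+b)/2 \rfloor$ perform $\mathbf{Swap}(a,h)$, then $\mathbf{Swap}(h,b)$, then $\mathbf{Swap}(a,h)$. The path $\gamma_{\lambda,\lambda_{[i,k]}}$ (with $k^*$ a fixed element of $[m]$; in the paper a maximizer of $\pi_L(A_k)$) starts at $\lambda$ and performs in order: (1) set the level-0 entry to $k^*$; (2) $\mathbf{Swap}(0,i)$; (3) set the level-0 entry to $k$; (4) $\mathbf{Swap}(0,i)$; (5) set the level-0 entry to $\lambda_0$. The path is the sequence of states consisting of $\lambda$ and the state after each elementary operation. Two states differ in coordinate $\ell$ if their level-$\ell$ entries are unequal. *)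

theory Defs
  imports Complex_Main
begin

text \<open>A state is a function from levels to values; only levels 0..L are relevant.\<close>
type_synonym state = "nat \<Rightarrow> nat"

datatype elem_op = SetZero nat | Exch nat nat

fun apply_op :: "elem_op \<Rightarrow> state \<Rightarrow> state" where
  "apply_op (SetZero v) s = s(0 := v)"
| "apply_op (Exch a b) s = s(a := s b, b := s a)"

function swap_ops :: "nat \<Rightarrow> nat \<Rightarrow> elem_op list" where
  "swap_ops a b =
     (if b - a \<le> 1 then [Exch a b]
      else (let h = (a + b) div 2 in swap_ops a h @ swap_ops h b @ swap_ops a h))"
  by pat_completeness auto
termination
  by (relation "measure (\<lambda>(a, b). b - a)") auto

fun run :: "state \<Rightarrow> elem_op list \<Rightarrow> state list" where
  "run s [] = [s]"
| "run s (op1 # os) = s # run (apply_op op1 s) os"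

definition path_ops :: "nat \<Rightarrow> state \<Rightarrow> nat \<Rightarrow> nat \<Rightarrow> elem_op list" where
  "path_ops kstar lam i k =
     [SetZero kstar] @ swap_ops 0 i @ [SetZero k] @ swap_ops 0 i @ [SetZero (lam 0)]"

definition gamma_path :: "nat \<Rightarrow> state \<Rightarrow> nat \<Rightarrow> nat \<Rightarrow> state list" where
  "gamma_path kstar lam i k = run lam (path_ops kstar lam i k)"

definition ndiff :: "nat \<Rightarrow> state \<Rightarrow> state \<Rightarrow> nat" where
  "ndiff L s t = card {l \<in> {0..L}. s l \<noteq> t l}"

end

theory Submission
  imports Defs "HOL-Library.Log_Nat"
begin

text \<open>
  Swap(a,b) halves b - a at each recursion level, and after each of its three recursive calls
  the state differs from the start state in at most three levels (a, h and b). Hence a state met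
  during Swap(a,b) differs from its start in at most 3 d + 2 levels, d being the recursion depth,
  which is about log (b - a). Every state of the path lies on one of the two runs of Swap(0,i),
  started from a state that agrees with \<open>\<lambda>\<close> outside levels 0 and i, so the triangle
  inequality for the Hamming distance gives O(log L). The values written are irrelevant.
\<close>

lemma start_in_set_run: "s \<in> set (run s xs)"
  by (cases xs) auto

lemma set_run_append:
  "set (run s (xs @ ys)) = set (run s xs) \<union> set (run (fold apply_op xs s) ys)"
  by (induction xs arbitrary: s) (auto simp: start_in_set_run)

declare swap_ops.simps[simp del]

lemma swap_ops_base: "b - a \<le> 1 \<Longrightarrow> swap_ops a b = [Exch a b]"
  by (subst swap_ops.simps) simp

lemma swap_ops_halve:
  "\<not> b - a \<le> 1 \<Longrightarrow> swap_ops a b =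
     swap_ops a ((a + b) div 2) @ swap_ops ((a + b) div 2) b @ swap_ops a ((a + b) div 2)"
  by (subst swap_ops.simps) (simp add: Let_def)

lemma fold_swap_ops: "fold apply_op (swap_ops a b) s = s(a := s b, b := s a)"
proof (induction a b arbitrary: s rule: swap_ops.induct)
  case (1 a b)
  show ?case
  proof (cases "b - a \<le> 1")
    case True
    then show ?thesis by (simp add: swap_ops_base fun_eq_iff)
  next
    case False
    define h where "h = (a + b) div 2"
    have "a < h" "h < b" using False unfolding h_def by auto
    then show ?thesis
      using "1.IH"[OF False h_def] False by (simp add: swap_ops_halve h_def[symmetric] fun_eq_iff)
  qed
qed

lemma ndiff_triangle: "ndiff L t u \<le> ndiff L t s + ndiff L s u"
proof -
  have "{l \<in> {0..L}. t l \<noteq> u l} \<subseteq> {l \<in> {0..L}. t l \<noteq> s l} \<union> {l \<in> {0..L}. s l \<noteq> u l}"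
    by auto
  then have "ndiff L t u \<le> card ({l \<in> {0..L}. t l \<noteq> s l} \<union> {l \<in> {0..L}. s l \<noteq> u l})"
    unfolding ndiff_def by (intro card_mono) auto
  also have "\<dots> \<le> ndiff L t s + ndiff L s u"
    unfolding ndiff_def by (rule card_Un_le)
  finally show ?thesis .
qed

lemma ndiff_le_card:
  assumes "\<And>l. l \<notin> A \<Longrightarrow> t l = s l" and "finite A"
  shows "ndiff L t s \<le> card A"
proof -
  have "{l \<in> {0..L}. t l \<noteq> s l} \<subseteq> A" using assms(1) by auto
  then show ?thesis unfolding ndiff_def using assms(2) by (rule card_mono[rotated])
qed

lemma ndiff_run_swap_ops:
  assumes "b - a \<le> 2 ^ d" and "t \<in> set (run s (swap_ops a b))"
  shows "ndiff L t s \<le> 3 * d + 2"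
  using assms
proof (induction a b arbitrary: s t d rule: swap_ops.induct)
  case (1 a b)
  show ?case
  proof (cases "b - a \<le> 1")
    case True
    then have "t = s \<or> t = s(a := s b, b := s a)"
      using "1.prems"(2) by (auto simp: swap_ops_base)
    moreover have "ndiff L (s(a := s b, b := s a)) s \<le> card {a, b}"
      by (rule ndiff_le_card) auto
    ultimately show ?thesis
      by (auto simp: ndiff_def card_insert_le_m1 intro: le_trans)
  next
    case False
    define h where "h = (a + b) div 2"
    have "a < h" "h < b" using False unfolding h_def by auto
    obtain d' where d: "d = Suc d'" using False "1.prems"(1) by (cases d) auto
    have halves: "h - a \<le> 2 ^ d'" "b - h \<le> 2 ^ d'" using "1.prems"(1) d unfolding h_def by auto
    define s1 where "s1 = fold apply_op (swap_ops a h) s"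
    define s2 where "s2 = fold apply_op (swap_ops h b) s1"
    have s1: "s1 = s(a := s h, h := s a)" unfolding s1_def by (rule fold_swap_ops)
    then have "ndiff L s1 s \<le> card {a, h}"
      by (intro ndiff_le_card) auto
    then have d1: "ndiff L s1 s \<le> 2"
      by (simp add: card_insert_le_m1 le_trans)
    have "s2 = s(a := s h, h := s b, b := s a)"
      unfolding s2_def s1 fold_swap_ops using \<open>a < h\<close> \<open>h < b\<close> by (auto simp: fun_eq_iff)
    then have "ndiff L s2 s \<le> card {a, h, b}"
      by (intro ndiff_le_card) auto
    then have d2: "ndiff L s2 s \<le> 3"
      by (simp add: card_insert_le_m1 le_trans)
    have "set (run s (swap_ops a b)) =
        set (run s (swap_ops a h)) \<union> set (run s1 (swap_ops h b)) \<union> set (run s2 (swap_ops a h))"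
      unfolding swap_ops_halve[OF False] h_def[symmetric]
      by (simp add: set_run_append s1_def s2_def Un_assoc)
    then consider "t \<in> set (run s (swap_ops a h))" | "t \<in> set (run s1 (swap_ops h b))"
      | "t \<in> set (run s2 (swap_ops a h))"
      using "1.prems"(2) by auto
    then show ?thesis
    proof cases
      case 1
      then show ?thesis using "1.IH"(1)[OF False h_def halves(1)] d by fastforce
    next
      case 2
      then have "ndiff L t s1 \<le> 3 * d' + 2" using "1.IH"(2)[OF False h_def halves(2)] by blast
      then show ?thesis using ndiff_triangle[of L t s s1] d1 d by simp
    next
      case 3
      then have "ndiff L t s2 \<le> 3 * d' + 2" using "1.IH"(3)[OF False h_def halves(1)] by blast
      then show ?thesis using ndiff_triangle[of L t s s2] d2 d by simp
    qed
  qed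
qed

lemma gamma_path_state_in_swap_run:
  assumes "\<tau> \<in> set (gamma_path kstar lam i k)"
  obtains s where "\<And>l. l \<noteq> 0 \<Longrightarrow> l \<noteq> i \<Longrightarrow> s l = lam l" and "\<tau> \<in> set (run s (swap_ops 0 i))"
proof -
  define s1 where "s1 = lam(0 := kstar)"
  define s2 where "s2 = fold apply_op (swap_ops 0 i) s1"
  define s3 where "s3 = s2(0 := k)"
  define s4 where "s4 = fold apply_op (swap_ops 0 i) s3"
  define s5 where "s5 = s4(0 := lam 0)"
  have "set (gamma_path kstar lam i k) =
      set (run s1 (swap_ops 0 i)) \<union> set (run s3 (swap_ops 0 i)) \<union> {lam, s2, s4, s5}"
    unfolding gamma_path_def path_ops_def s1_def s2_def s3_def s4_def s5_def
    by (simp add: set_run_append)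
  then obtain s where "s \<in> {s1, s3, lam, s2, s4, s5}" and "\<tau> \<in> set (run s (swap_ops 0 i))"
    using assms start_in_set_run by blast
  moreover have "s l = lam l" if "s \<in> {s1, s3, lam, s2, s4, s5}" "l \<noteq> 0" "l \<noteq> i" for s l
    using that by (auto simp: s1_def s2_def s3_def s4_def s5_def fold_swap_ops)
  ultimately show ?thesis
    using that by blast
qed

lemma ndiff_gamma_path:
  assumes "i \<le> 2 ^ d" and "\<tau> \<in> set (gamma_path kstar lam i k)"
  shows "ndiff L \<tau> lam \<le> 3 * d + 4" and "ndiff L \<tau> (lam(i := k)) \<le> 3 * d + 5"
proof -
  obtain s where agree: "\<And>l. l \<noteq> 0 \<Longrightarrow> l \<noteq> i \<Longrightarrow> s l = lam l"
    and run: "\<tau> \<in> set (run s (swap_ops 0 i))"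
    using gamma_path_state_in_swap_run[OF assms(2)] by blast
  have "ndiff L s lam \<le> card {0, i}"
    by (rule ndiff_le_card) (use agree in auto)
  then have "ndiff L s lam \<le> 2"
    by (simp add: card_insert_le_m1 le_trans)
  moreover have "ndiff L \<tau> s \<le> 3 * d + 2"
    using ndiff_run_swap_ops[OF _ run] assms(1) by simp
  ultimately show lam: "ndiff L \<tau> lam \<le> 3 * d + 4"
    using ndiff_triangle[of L \<tau> lam s] by simp
  have "ndiff L lam (lam(i := k)) \<le> card {i}"
    by (rule ndiff_le_card) auto
  then show "ndiff L \<tau> (lam(i := k)) \<le> 3 * d + 5"
    using lam ndiff_triangle[of L \<tau> "lam(i := k)" lam] by simp
qed

theorem lemma4:
  shows "\<exists>C::real. C > 0 \<and>
    (\<forall>L m kstar i k (lam::state).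
       L \<ge> 2 \<longrightarrow> m \<ge> 1 \<longrightarrow> kstar \<in> {1..m} \<longrightarrow> i \<le> L \<longrightarrow> k \<in> {1..m} \<longrightarrow>
       (\<forall>l\<le>L. lam l \<in> {1..m}) \<longrightarrow>
       (\<forall>\<tau> \<in> set (gamma_path kstar lam i k).
          real (ndiff L \<tau> lam) \<le> C * ln (real L) \<and>
          real (ndiff L \<tau> (lam(i := k))) \<le> C * ln (real L)))"
proof (intro exI[of _ "11 / ln 2"] conjI allI impI ballI)
  show "0 < 11 / ln (2::real)" by simp
next
  fix L m kstar i k and lam :: state and \<tau>
  assume L: "L \<ge> 2" and "i \<le> L" and \<tau>: "\<tau> \<in> set (gamma_path kstar lam i k)"
  define d where "d = ceillog2 L"
  have "i \<le> 2 ^ d" using \<open>i \<le> L\<close> le_two_power_ceillog2[of L] unfolding d_def by linarith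
  note bounds = ndiff_gamma_path[OF this \<tau>, of L]
  have "real d < log 2 (real L) + 1" using L ceillog2_less_log[of L] unfolding d_def by simp
  moreover have "1 \<le> log 2 (real L)" using L by simp
  ultimately have "real (3 * d + 5) \<le> 11 * log 2 (real L)" by simp
  also have "\<dots> = 11 / ln 2 * ln (real L)" by (simp add: log_def)
  finally show "real (ndiff L \<tau> lam) \<le> 11 / ln 2 * ln (real L)"
    and "real (ndiff L \<tau> (lam(i := k))) \<le> 11 / ln 2 * ln (real L)"
    using bounds by simp_all
qed

end
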